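(* Let $A$ be a $p$-adically separated $\delta$-ring. If $pA$ is a prime ideal of $A$, then $A$ is $p$-torsion-free.
   Context: All rings are commutative $\mathbb{Z}_{(p)}$-algebras. A $\delta$-ring is a ring $A$ with $\delta:A\to A$ satisfying $\delta(0)=\delta(1)=0$, $\delta(a+b)=\delta(a)+\delta(b)+\frac{a^p+b^p-(a+b)^p}{p}$, $\delta(ab)=a^p\delta(b)+b^p\delta(a)+p\delta(a)\delta(b)$. *)

theory Defs
  imports "HOL-Computational_Algebra.Primes"
begin

text \<open>Rings are commutative rings (type class comm_ring_1). A ring is a
  Z_(p)-algebra iff every integer prime to p is invertible in it.\<close>

definition zp_algebra :: "nat \<Rightarrow> 'a::comm_ring_1 itself \<Rightarrow> bool" where
  "zp_algebra p _ \<longleftrightarrow> (\<forall>m::int. coprime m (int p) \<longrightarrow> (of_int m :: 'a) dvd 1)"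

text \<open>The integer polynomial (a^p + b^p - (a+b)^p)/p, written with the
  integer coefficients (p choose i)/p.\<close>

definition carry_poly :: "nat \<Rightarrow> 'a::comm_ring_1 \<Rightarrow> 'a \<Rightarrow> 'a" where
  "carry_poly p a b =
     - (\<Sum>i\<in>{1..<p}. of_nat ((p choose i) div p) * a ^ i * b ^ (p - i))"

definition is_delta_ring :: "nat \<Rightarrow> ('a::comm_ring_1 \<Rightarrow> 'a) \<Rightarrow> bool" where
  "is_delta_ring p \<delta> \<longleftrightarrow>
     \<delta> 0 = 0 \<and> \<delta> 1 = 0 \<and>
     (\<forall>a b. \<delta> (a + b) = \<delta> a + \<delta> b + carry_poly p a b) \<and>
     (\<forall>a b. \<delta> (a * b) = a ^ p * \<delta> b + b ^ p * \<delta> a + of_nat p * \<delta> a * \<delta> b)"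

definition is_ideal :: "'a::comm_ring_1 set \<Rightarrow> bool" where
  "is_ideal I \<longleftrightarrow> 0 \<in> I \<and> (\<forall>x\<in>I. \<forall>y\<in>I. x + y \<in> I) \<and> (\<forall>r. \<forall>x\<in>I. r * x \<in> I)"

definition is_prime_ideal :: "'a::comm_ring_1 set \<Rightarrow> bool" where
  "is_prime_ideal I \<longleftrightarrow> is_ideal I \<and> I \<noteq> UNIV \<and>
     (\<forall>a b. a * b \<in> I \<longrightarrow> a \<in> I \<or> b \<in> I)"

definition principal_ideal :: "'a::comm_ring_1 \<Rightarrow> 'a set" where
  "principal_ideal x = {x * y | y. True}"

definition p_adically_separated :: "nat \<Rightarrow> 'a::comm_ring_1 itself \<Rightarrow> bool" where
  "p_adically_separated p _ \<longleftrightarrow>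
     (\<Inter>n. principal_ideal ((of_nat p :: 'a) ^ n)) = {0}"

definition p_torsion_free :: "nat \<Rightarrow> 'a::comm_ring_1 itself \<Rightarrow> bool" where
  "p_torsion_free p _ \<longleftrightarrow> (\<forall>a::'a. of_nat p * a = 0 \<longrightarrow> a = 0)"

end

theory Submission
  imports Defs
begin

text \<open>In a \<open>\<delta>\<close>-ring, \<open>\<delta>(p) = 1 - p\<^sup>p\<^sup>-\<^sup>1\<close>, which is a unit in a \<open>\<int>\<^sub>(\<^sub>p\<^sub>)\<close>-algebra, and
  \<open>\<delta>(p x) = x\<^sup>p \<delta>(p) + p \<delta>(x)\<close>. Iterating, \<open>\<delta>(p\<^sup>k\<^sup>+\<^sup>1 x) \<equiv> p\<^sup>k x\<^sup>p \<delta>(p)\<close> modulo \<open>p\<^sup>k\<^sup>+\<^sup>1\<close>.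
  So if \<open>p\<^sup>k\<^sup>+\<^sup>1 x = 0\<close>, then \<open>p\<^sup>k (x\<^sup>p \<delta>(p) - p s) = 0\<close> for some \<open>s\<close>; by induction on \<open>k\<close>
  the element \<open>x\<^sup>p \<delta>(p)\<close>, hence \<open>x\<^sup>p\<close>, hence (\<open>pA\<close> being prime) \<open>x\<close>, lies in \<open>pA\<close>.
  Writing \<open>x = p y\<close>, \<open>y\<close> is again \<open>p\<close>-power torsion, so every \<open>p\<close>-power torsion
  element lies in \<open>\<Inter>\<^sub>n p\<^sup>n A = 0\<close>.\<close>

lemma principal_ideal_iff_dvd: "x \<in> principal_ideal a \<longleftrightarrow> a dvd x"
  by (auto simp: principal_ideal_def dvd_def)

lemma prime_ideal_principal_dvd_power:
  assumes "is_prime_ideal (principal_ideal q)" and "q dvd x ^ n"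
  shows "q dvd x"
  using assms(2)
proof (induction n)
  case 0
  then have "principal_ideal q = UNIV"
    by (auto simp: principal_ideal_iff_dvd intro: dvd_trans[OF _ one_dvd])
  with assms(1) show ?case
    by (simp add: is_prime_ideal_def)
next
  case (Suc n)
  then show ?case
    using assms(1) by (auto simp: is_prime_ideal_def principal_ideal_iff_dvd)
qed

lemma zp_algebra_one_minus_unit:
  assumes "zp_algebra p TYPE('a::comm_ring_1)" and "int p dvd k"
  shows "(1 - of_int k :: 'a) dvd 1"
proof -
  have "coprime (1 - k) (int p)"
  proof (rule coprimeI)
    fix c assume "c dvd 1 - k" and "c dvd int p"
    with assms(2) have "c dvd (1 - k) + k"
      by (meson dvd_add dvd_trans)
    then show "is_unit c" by simp
  qed
  with assms(1) show ?thesis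
    unfolding zp_algebra_def by (metis of_int_1 of_int_diff)
qed

lemma of_nat_mult_carry_poly:
  fixes a b :: "'a::comm_ring_1"
  assumes "prime p"
  shows "of_nat p * carry_poly p a b = a ^ p + b ^ p - (a + b) ^ p"
proof -
  have "p > 0" using assms prime_gt_0_nat by blast
  let ?term = "\<lambda>i. of_nat (p choose i) * a ^ i * b ^ (p - i)"
  have middle: "of_nat p * (\<Sum>i\<in>{1..<p}. of_nat ((p choose i) div p) * a ^ i * b ^ (p - i))
      = (\<Sum>i\<in>{1..<p}. ?term i)"
    unfolding sum_distrib_left
  proof (rule sum.cong[OF refl])
    fix i assume "i \<in> {1..<p}"
    then have "p * ((p choose i) div p) = p choose i"
      using assms dvd_choose_prime by simp
    then show "of_nat p * (of_nat ((p choose i) div p) * a ^ i * b ^ (p - i)) = ?term i"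
      by (metis mult.assoc of_nat_mult)
  qed
  have "{..p} = insert 0 (insert p {1..<p})"
    using \<open>p > 0\<close> by auto
  then have "(a + b) ^ p = b ^ p + a ^ p + (\<Sum>i\<in>{1..<p}. ?term i)"
    using \<open>p > 0\<close> by (simp add: binomial_ring)
  with middle show ?thesis
    unfolding carry_poly_def by (simp add: algebra_simps)
qed

lemma of_int_carry_poly:
  "carry_poly p (of_int a) (of_int b) = (of_int (carry_poly p a b) :: 'a::comm_ring_1)"
  unfolding carry_poly_def by simp

text \<open>The integer \<open>d\<close> is \<open>(n - n\<^sup>p)/p\<close>; it cannot be obtained by cancelling \<open>p\<close> in
  the ring itself, which may have \<open>p\<close>-torsion.\<close>

lemma delta_of_nat:
  fixes \<delta> :: "'a::comm_ring_1 \<Rightarrow> 'a"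
  assumes "prime p" and "is_delta_ring p \<delta>"
  shows "\<exists>d. \<delta> (of_nat n :: 'a) = of_int d \<and> int p * d = int n - int n ^ p"
proof (induction n)
  case 0
  have "p > 0" using assms(1) prime_gt_0_nat by blast
  with assms(2) show ?case
    by (auto simp: is_delta_ring_def intro!: exI[of _ 0])
next
  case (Suc n)
  then obtain d where d: "\<delta> (of_nat n :: 'a) = of_int d" "int p * d = int n - int n ^ p"
    by blast
  have "\<delta> (of_nat (Suc n) :: 'a) = \<delta> (of_int (int n) + of_int 1)"
    by (simp add: add.commute)
  also have "\<dots> = of_int (d + carry_poly p (int n) 1)"
    using assms(2) d(1) by (simp add: is_delta_ring_def of_int_carry_poly[symmetric])
  finally show ?case
    using d(2) of_nat_mult_carry_poly[OF assms(1), of "int n" 1]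
    by (intro exI[of _ "d + carry_poly p (int n) 1"]) (simp add: algebra_simps)
qed

lemma delta_of_prime:
  fixes \<delta> :: "'a::comm_ring_1 \<Rightarrow> 'a"
  assumes "prime p" and "is_delta_ring p \<delta>"
  shows "\<delta> (of_nat p :: 'a) = 1 - of_nat p ^ (p - 1)"
proof -
  obtain d where d: "\<delta> (of_nat p :: 'a) = of_int d" "int p * d = int p - int p ^ p"
    using delta_of_nat[OF assms] by blast
  have "p > 0" using assms(1) prime_gt_0_nat by blast
  then have "int p ^ p = int p * int p ^ (p - 1)"
    by (metis power_eq_if gr_implies_not0)
  with d(2) have "int p * d = int p * (1 - int p ^ (p - 1))"
    by (simp add: right_diff_distrib)
  with \<open>p > 0\<close> have "d = 1 - int p ^ (p - 1)"
    by simp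
  with d(1) show ?thesis by simp
qed

lemma delta_of_prime_mult:
  fixes \<delta> :: "'a::comm_ring_1 \<Rightarrow> 'a"
  assumes "prime p" and "is_delta_ring p \<delta>"
  shows "\<delta> (of_nat p * x) = x ^ p * \<delta> (of_nat p) + of_nat p * \<delta> x"
proof -
  let ?P = "of_nat p :: 'a"
  have "p > 0" using assms(1) prime_gt_0_nat by blast
  then have "?P ^ p = ?P * ?P ^ (p - 1)"
    by (metis power_eq_if gr_implies_not0)
  then have "?P ^ p * \<delta> x + ?P * \<delta> ?P * \<delta> x = ?P * \<delta> x * (?P ^ (p - 1) + \<delta> ?P)"
    by (simp add: algebra_simps)
  also have "\<dots> = ?P * \<delta> x"
    using delta_of_prime[OF assms] by simp
  finally have cancel: "?P ^ p * \<delta> x + ?P * \<delta> ?P * \<delta> x = ?P * \<delta> x" .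
  have "\<delta> (?P * x) = ?P ^ p * \<delta> x + x ^ p * \<delta> ?P + ?P * \<delta> ?P * \<delta> x"
    using assms(2) by (simp add: is_delta_ring_def)
  also have "\<dots> = x ^ p * \<delta> ?P + (?P ^ p * \<delta> x + ?P * \<delta> ?P * \<delta> x)"
    by (simp only: add_ac)
  finally show ?thesis
    unfolding cancel .
qed

lemma delta_prime_power_mult_dvd:
  fixes \<delta> :: "'a::comm_ring_1 \<Rightarrow> 'a"
  assumes "prime p" and "is_delta_ring p \<delta>"
  shows "(of_nat p :: 'a) ^ Suc k
    dvd \<delta> (of_nat p ^ Suc k * x) - of_nat p ^ k * x ^ p * \<delta> (of_nat p)"
proof (induction k)
  case 0
  then show ?case
    using delta_of_prime_mult[OF assms] by simp
next
  case (Suc k)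
  let ?P = "of_nat p :: 'a"
  have "Suc (Suc k) \<le> Suc k * 2"
    by simp
  also have "\<dots> \<le> Suc k * p"
    using prime_ge_2_nat[OF assms(1)] by (rule mult_le_mono2)
  finally have "Suc (Suc k) \<le> Suc k * p" .
  then have "?P ^ Suc (Suc k) dvd ?P ^ (Suc k * p) * (x ^ p * \<delta> ?P)"
    by (intro dvd_mult2 le_imp_power_dvd)
  also have "\<dots> = (?P ^ Suc k * x) ^ p * \<delta> ?P"
    by (simp only: power_mult_distrib power_mult mult.assoc)
  finally have "?P ^ Suc (Suc k) dvd (?P ^ Suc k * x) ^ p * \<delta> ?P" .
  moreover have "?P ^ Suc (Suc k) dvd ?P * (\<delta> (?P ^ Suc k * x) - ?P ^ k * x ^ p * \<delta> ?P)"
    using Suc.IH by (simp add: mult_dvd_mono)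
  ultimately have "?P ^ Suc (Suc k) dvd (?P ^ Suc k * x) ^ p * \<delta> ?P
      + ?P * (\<delta> (?P ^ Suc k * x) - ?P ^ k * x ^ p * \<delta> ?P)"
    by (rule dvd_add)
  also have "\<dots> = \<delta> (?P ^ Suc (Suc k) * x) - ?P ^ Suc k * x ^ p * \<delta> ?P"
    using delta_of_prime_mult[OF assms, of "?P ^ Suc k * x"]
    by (simp add: algebra_simps)
  finally show ?case .
qed

lemma prime_power_torsion_imp_dvd:
  fixes \<delta> :: "'a::comm_ring_1 \<Rightarrow> 'a" and x :: 'a
  assumes "prime p" and "is_delta_ring p \<delta>" and "\<delta> (of_nat p) dvd 1"
    and "is_prime_ideal (principal_ideal (of_nat p :: 'a))"
    and "of_nat p ^ k * x = 0"
  shows "of_nat p dvd x"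
  using assms(5)
proof (induction k arbitrary: x)
  case 0
  then show ?case by simp
next
  case (Suc k)
  let ?P = "of_nat p :: 'a"
  have "\<delta> 0 = 0" using assms(2) by (simp add: is_delta_ring_def)
  with Suc.prems have "?P ^ Suc k dvd ?P ^ k * (x ^ p * \<delta> ?P)"
    using delta_prime_power_mult_dvd[OF assms(1,2), of k x] by (simp add: mult.assoc)
  then obtain s where "?P ^ k * (x ^ p * \<delta> ?P) = ?P ^ Suc k * s"
    by blast
  then have "?P ^ k * (x ^ p * \<delta> ?P - ?P * s) = 0"
    by (simp add: algebra_simps)
  then have "?P dvd x ^ p * \<delta> ?P - ?P * s"
    by (rule Suc.IH)
  then have "?P dvd (x ^ p * \<delta> ?P - ?P * s) + ?P * s"
    by (rule dvd_add) simp
  then have "?P dvd x ^ p * \<delta> ?P * u" for u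
    by (simp add: dvd_mult2)
  moreover obtain u where "1 = \<delta> ?P * u"
    using assms(3) by (rule dvdE)
  ultimately have "?P dvd x ^ p"
    by (metis mult.assoc mult_1_right)
  then show ?case
    by (rule prime_ideal_principal_dvd_power[OF assms(4)])
qed

lemma prime_power_torsion_imp_dvd_powers:
  fixes \<delta> :: "'a::comm_ring_1 \<Rightarrow> 'a" and x :: 'a
  assumes "prime p" and "is_delta_ring p \<delta>" and "\<delta> (of_nat p) dvd 1"
    and "is_prime_ideal (principal_ideal (of_nat p :: 'a))"
    and "of_nat p ^ k * x = 0"
  shows "of_nat p ^ n dvd x"
  using assms(5)
proof (induction n arbitrary: k x)
  case 0
  then show ?case by simp
next
  case (Suc n)
  obtain y where y: "x = of_nat p * y"
    using prime_power_torsion_imp_dvd[OF assms(1-4) Suc.prems] by blast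
  with Suc.prems have "of_nat p ^ Suc k * y = 0"
    by (simp add: algebra_simps)
  then have "of_nat p ^ n dvd y"
    by (rule Suc.IH)
  with y show ?case
    by (simp add: mult_dvd_mono)
qed

theorem lemma3p2:
  fixes p :: nat and \<delta> :: "'a::comm_ring_1 \<Rightarrow> 'a"
  assumes "prime p"
    and "zp_algebra p TYPE('a)"
    and "is_delta_ring p \<delta>"
    and "p_adically_separated p TYPE('a)"
    and "is_prime_ideal (principal_ideal (of_nat p :: 'a))"
  shows "p_torsion_free p TYPE('a)"
  unfolding p_torsion_free_def
proof (intro allI impI)
  fix a :: 'a
  assume "of_nat p * a = 0"
  have "int p dvd int p ^ (p - 1)"
    using prime_ge_2_nat[OF assms(1)] by (simp add: dvd_power)
  then have "\<delta> (of_nat p :: 'a) dvd 1"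
    using zp_algebra_one_minus_unit[OF assms(2)] delta_of_prime[OF assms(1,3)] by fastforce
  with \<open>of_nat p * a = 0\<close> have "\<forall>n. a \<in> principal_ideal (of_nat p ^ n)"
    using prime_power_torsion_imp_dvd_powers[OF assms(1,3) _ assms(5), where k = 1]
    by (simp add: principal_ideal_iff_dvd)
  with assms(4) show "a = 0"
    unfolding p_adically_separated_def by blast
qed

end
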